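(* Let $A, B, P$ be points in the Euclidean plane and $r>0$ a number with $|AP|>r$ and $|BP|>r$. Consider the maximum angle problem: find a point $P^*$ with $|PP^*|=r$ maximizing the angle $\angle AP^*B\in[0,\pi]$. This problem can be solved using a quadratic equation; that is, a maximizing point $P^*$ exists and its coordinates can be obtained from the coordinates of $A$, $B$, $P$ and from $r$ by finitely many field operations and square roots.
   Context: Here $\angle AQB\in[0,\pi]$ denotes the non-reflex angle at $Q$ between rays $QA$ and $QB$. *)

theory Defs
  imports "HOL-Analysis.Analysis"
begin

text \<open>Points of the Euclidean plane are modelled as complex numbers; the coordinates
of a point z are Re z and Im z.\<close>

definition pangle :: "complex \<Rightarrow> complex \<Rightarrow> complex \<Rightarrow> real" where
  "pangle A Q B = arccos (inner (A - Q) (B - Q) / (norm (A - Q) * norm (B - Q)))"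

inductive_set sqrt_closure :: "real set \<Rightarrow> real set" for S :: "real set" where
  base: "x \<in> S \<Longrightarrow> x \<in> sqrt_closure S"
| zero: "0 \<in> sqrt_closure S"
| one: "1 \<in> sqrt_closure S"
| add: "x \<in> sqrt_closure S \<Longrightarrow> y \<in> sqrt_closure S \<Longrightarrow> x + y \<in> sqrt_closure S"
| neg: "x \<in> sqrt_closure S \<Longrightarrow> - x \<in> sqrt_closure S"
| mult: "x \<in> sqrt_closure S \<Longrightarrow> y \<in> sqrt_closure S \<Longrightarrow> x * y \<in> sqrt_closure S"
| inv: "x \<in> sqrt_closure S \<Longrightarrow> x \<noteq> 0 \<Longrightarrow> inverse x \<in> sqrt_closure S"
| sqrt: "x \<in> sqrt_closure S \<Longrightarrow> x \<ge> 0 \<Longrightarrow> sqrt x \<in> sqrt_closure S"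

end

theory Submission
  imports Defs
begin

text \<open>
  Translate P to the origin and write a, b for A - P, B - P. For x on the circle
  |x| = r the angle at x is the argument of w = (a - x) / (b - x), so it is maximal
  where the cosine Re (sgn w) is minimal. The Moebius map x \<mapsto> (a - x) / (b - x)
  sends the circle onto the Apollonius circle |a - w b| = r |1 - w|, whose centre c
  and radius R < |c| come from the data by field operations and a square root.
  After a rotation moving c onto the positive real axis, the cosine of the argument
  is minimised over this circle either where a fixed ray meets it, which is found
  from a quadratic equation, or at a point of tangency from the origin. Either
  point, and hence its preimage under the Moebius map, has coordinates built from
  the data by field operations and square roots.
\<close>

lemma sqrt_closure_diff:
  "x \<in> sqrt_closure S \<Longrightarrow> y \<in> sqrt_closure S \<Longrightarrow> x - y \<in> sqrt_closure S"
  using sqrt_closure.add[OF _ sqrt_closure.neg] by (metis diff_conv_add_uminus)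

lemma sqrt_closure_divide:
  assumes "x \<in> sqrt_closure S" "y \<in> sqrt_closure S"
  shows "x / y \<in> sqrt_closure S"
  using assms sqrt_closure.mult sqrt_closure.inv sqrt_closure.zero
  by (cases "y = 0") (simp_all add: divide_inverse)

lemma sqrt_closure_power:
  "x \<in> sqrt_closure S \<Longrightarrow> x ^ n \<in> sqrt_closure S"
  by (induction n) (simp_all add: sqrt_closure.one sqrt_closure.mult)

definition constructible :: "real set \<Rightarrow> complex \<Rightarrow> bool" where
  "constructible S z \<longleftrightarrow> Re z \<in> sqrt_closure S \<and> Im z \<in> sqrt_closure S"

lemma constructible_Complex:
  "x \<in> sqrt_closure S \<Longrightarrow> y \<in> sqrt_closure S \<Longrightarrow> constructible S (Complex x y)"
  by (simp add: constructible_def)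

lemma constructible_of_real:
  "x \<in> sqrt_closure S \<Longrightarrow> constructible S (of_real x)"
  by (simp add: constructible_def sqrt_closure.zero)

lemma constructible_add:
  "constructible S z \<Longrightarrow> constructible S w \<Longrightarrow> constructible S (z + w)"
  by (simp add: constructible_def sqrt_closure.add)

lemma constructible_diff:
  "constructible S z \<Longrightarrow> constructible S w \<Longrightarrow> constructible S (z - w)"
  by (simp add: constructible_def sqrt_closure_diff)

lemma constructible_mult:
  "constructible S z \<Longrightarrow> constructible S w \<Longrightarrow> constructible S (z * w)"
  by (simp add: constructible_def sqrt_closure_diff sqrt_closure.mult sqrt_closure.add)

lemma constructible_minus: "constructible S z \<Longrightarrow> constructible S (- z)"
  by (simp add: constructible_def sqrt_closure.neg)

lemma constructible_cnj: "constructible S z \<Longrightarrow> constructible S (cnj z)"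
  by (simp add: constructible_def sqrt_closure.neg)

lemma constructible_divide:
  "constructible S z \<Longrightarrow> constructible S w \<Longrightarrow> constructible S (z / w)"
  unfolding constructible_def Re_divide Im_divide
  by (intro conjI sqrt_closure_divide sqrt_closure_diff sqrt_closure.add sqrt_closure.mult
      sqrt_closure_power; simp)

lemma sqrt_closure_norm: "constructible S z \<Longrightarrow> cmod z \<in> sqrt_closure S"
  unfolding constructible_def cmod_def
  by (intro sqrt_closure.sqrt sqrt_closure.add sqrt_closure_power) auto

lemma constructible_sgn: "constructible S z \<Longrightarrow> constructible S (sgn z)"
  unfolding sgn_eq by (intro constructible_divide constructible_of_real sqrt_closure_norm)

text \<open>The unit vectors u with k \<le> u1 form the arc of the unit circle between (k, s) and
  (k, -s). When the direction of -(g1, -g2) lies outside this arc, the linear form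
  u \<mapsto> g1 u1 - g2 u2 is minimal on it at the endpoint whose second coordinate has the
  sign of g2.\<close>

lemma linear_min_on_circular_cap:
  fixes k s u1 u2 g1 g2 :: real
  assumes "0 \<le> k" "0 \<le> s" "k\<^sup>2 + s\<^sup>2 = 1" "u1\<^sup>2 + u2\<^sup>2 = 1" "k \<le> u1" "\<bar>u2\<bar> \<le> s"
    and "0 \<le> g1 \<or> s * \<bar>g1\<bar> < k * \<bar>g2\<bar>"
  shows "g1 * k - \<bar>g2\<bar> * s \<le> g1 * u1 - g2 * u2"
proof -
  have "g2 * u2 \<le> \<bar>g2\<bar> * \<bar>u2\<bar>"
    by (metis abs_ge_self abs_mult)
  moreover have "\<bar>g1\<bar> * (u1 - k) \<le> \<bar>g2\<bar> * (s - \<bar>u2\<bar>)" if "g1 < 0"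
  proof -
    have "\<bar>g1\<bar> * \<bar>u2\<bar> \<le> \<bar>g1\<bar> * s" "\<bar>g2\<bar> * k \<le> \<bar>g2\<bar> * u1"
      using assms(5,6) by (simp_all add: mult_left_mono)
    moreover have "\<bar>g1\<bar> * s < \<bar>g2\<bar> * k"
      using assms(7) that by (simp add: mult.commute)
    ultimately have "\<bar>g1\<bar> * (s + \<bar>u2\<bar>) \<le> \<bar>g2\<bar> * (u1 + k)"
      by (simp add: algebra_simps)
    then have "(s - \<bar>u2\<bar>) * (\<bar>g1\<bar> * (s + \<bar>u2\<bar>)) \<le> (s - \<bar>u2\<bar>) * (\<bar>g2\<bar> * (u1 + k))"
      using assms(6) by (simp add: mult_left_mono)
    moreover have "(u1 - k) * (u1 + k) = (s - \<bar>u2\<bar>) * (s + \<bar>u2\<bar>)"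
      using assms(3,4) by (simp add: algebra_simps power2_eq_square)
    ultimately have "(\<bar>g1\<bar> * (u1 - k)) * (u1 + k) \<le> (\<bar>g2\<bar> * (s - \<bar>u2\<bar>)) * (u1 + k)"
      by (metis mult.assoc mult.commute mult.left_commute)
    then show ?thesis
    proof (cases "u1 + k = 0")
      case True
      then have "u1 = k"
        using assms(1,5) by linarith
      then show ?thesis
        using assms(6) by simp
    qed (use assms(1,5) in \<open>simp add: mult_le_cancel_right\<close>)
  qed
  ultimately show ?thesis
    using assms mult_left_mono[of k u1 g1] mult_left_mono[of "\<bar>u2\<bar>" s "\<bar>g2\<bar>"]
    by (cases "g1 < 0") (auto simp: algebra_simps)
qed

lemma unit_vector_slope_less:
  fixes k s g1 g2 :: real
  assumes "0 \<le> k" "k\<^sup>2 + s\<^sup>2 = 1" "g1\<^sup>2 + g2\<^sup>2 = 1" "s\<^sup>2 < g2\<^sup>2"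
  shows "s * \<bar>g1\<bar> < k * \<bar>g2\<bar>"
proof (rule power_less_imp_less_base)
  have g1: "g1\<^sup>2 = 1 - g2\<^sup>2" and k: "k\<^sup>2 = 1 - s\<^sup>2"
    using assms(2,3) by simp_all
  have "(s * \<bar>g1\<bar>)\<^sup>2 = s\<^sup>2 - s\<^sup>2 * g2\<^sup>2" "(k * \<bar>g2\<bar>)\<^sup>2 = g2\<^sup>2 - s\<^sup>2 * g2\<^sup>2"
    by (simp_all add: power_mult_distrib g1 k right_diff_distrib left_diff_distrib)
  then show "(s * \<bar>g1\<bar>)\<^sup>2 < (k * \<bar>g2\<bar>)\<^sup>2"
    using assms(4) by linarith
qed (use assms(1) in simp)

lemma sgn_bounds_on_circle:
  fixes d R :: real and y :: complex
  assumes on_circle: "cmod (y - of_real d) = R" and "R < d"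
  shows "sqrt (d\<^sup>2 - R\<^sup>2) / d \<le> Re (sgn y)" and "\<bar>Im (sgn y)\<bar> \<le> R / d"
proof -
  define n where "n = cmod y"
  have "0 \<le> R"
    using on_circle by auto
  with \<open>R < d\<close> have "0 < d"
    by linarith
  have "\<bar>Re y - d\<bar> \<le> R"
    using abs_Re_le_cmod[of "y - of_real d"] on_circle by simp
  then have "0 < Re y" "0 < n"
    using \<open>R < d\<close> by (auto simp: n_def)
  have circle_eq: "(Re y - d)\<^sup>2 + (Im y)\<^sup>2 = R\<^sup>2"
    using on_circle cmod_power2[of "y - of_real d"] by simp
  have n2: "n\<^sup>2 = (Re y)\<^sup>2 + (Im y)\<^sup>2"
    by (simp add: n_def cmod_power2)
  have "((y1 - d)\<^sup>2 + y2\<^sup>2) * (y1\<^sup>2 + y2\<^sup>2) - d\<^sup>2 * y2\<^sup>2 = (y1\<^sup>2 + y2\<^sup>2 - d * y1)\<^sup>2"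
    for y1 y2 :: real
    by (simp add: power2_eq_square algebra_simps)
  then have "R\<^sup>2 * n\<^sup>2 - d\<^sup>2 * (Im y)\<^sup>2 = (n\<^sup>2 - d * Re y)\<^sup>2"
    unfolding n2 circle_eq[symmetric] .
  then have sq: "d\<^sup>2 * (Im y)\<^sup>2 \<le> R\<^sup>2 * n\<^sup>2"
    by (metis diff_ge_0_iff_ge zero_le_power2)
  then have "(d * \<bar>Im y\<bar>)\<^sup>2 \<le> (R * n)\<^sup>2"
    by (simp add: power_mult_distrib)
  then have "d * \<bar>Im y\<bar> \<le> R * n"
    by (rule power2_le_imp_le) (use \<open>0 \<le> R\<close> \<open>0 < n\<close> in simp)
  then show "\<bar>Im (sgn y)\<bar> \<le> R / d"
    using \<open>0 < d\<close> \<open>0 < n\<close> by (simp add: n_def[symmetric] abs_divide divide_simps mult.commute)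
  have "R\<^sup>2 \<le> d\<^sup>2"
    using \<open>0 \<le> R\<close> \<open>R < d\<close> by (simp add: power_mono)
  then have "(sqrt (d\<^sup>2 - R\<^sup>2) * n)\<^sup>2 = d\<^sup>2 * n\<^sup>2 - R\<^sup>2 * n\<^sup>2"
    by (simp add: power_mult_distrib algebra_simps)
  also have "\<dots> \<le> d\<^sup>2 * n\<^sup>2 - d\<^sup>2 * (Im y)\<^sup>2"
    using sq by linarith
  also have "\<dots> = (d * Re y)\<^sup>2"
    by (simp add: n2 power_mult_distrib algebra_simps)
  finally have "(sqrt (d\<^sup>2 - R\<^sup>2) * n)\<^sup>2 \<le> (d * Re y)\<^sup>2" .
  then have "sqrt (d\<^sup>2 - R\<^sup>2) * n \<le> d * Re y"
    by (rule power2_le_imp_le) (use \<open>0 < d\<close> \<open>0 < Re y\<close> in simp)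
  then show "sqrt (d\<^sup>2 - R\<^sup>2) / d \<le> Re (sgn y)"
    using \<open>0 < d\<close> \<open>0 < n\<close> by (simp add: n_def[symmetric] divide_simps mult.commute)
qed

lemma Re_Im_sq_sum_eq_1: "cmod g = 1 \<Longrightarrow> (Re g)\<^sup>2 + (Im g)\<^sup>2 = 1"
  by (metis cmod_power2 power_one)

text \<open>t is the smaller root of the quadratic equation |t e - d| = R, where the unit vector
  e = - cnj g minimises Re (g * e).\<close>

lemma ray_point_on_circle:
  fixes d R :: real and g :: complex
  assumes "0 \<le> R" "R < d" and g: "cmod g = 1" and ray: "Re g < 0" "(d * Im g)\<^sup>2 \<le> R\<^sup>2"
  defines "t \<equiv> - d * Re g - sqrt (R\<^sup>2 - (d * Im g)\<^sup>2)"
  shows "0 < t" and "cmod (- (of_real t * cnj g) - of_real d) = R"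
proof -
  define s where "s = sqrt (R\<^sup>2 - (d * Im g)\<^sup>2)"
  have g2: "(Re g)\<^sup>2 + (Im g)\<^sup>2 = 1"
    using g by (rule Re_Im_sq_sum_eq_1)
  have s2: "s\<^sup>2 = R\<^sup>2 - (d * Im g)\<^sup>2" and "0 \<le> s"
    using ray(2) by (simp_all add: s_def)
  have "d\<^sup>2 = d\<^sup>2 * ((Re g)\<^sup>2 + (Im g)\<^sup>2)"
    using g2 by simp
  also have "\<dots> = (d * Re g)\<^sup>2 + (d * Im g)\<^sup>2"
    by (simp add: power_mult_distrib distrib_left)
  finally have "s\<^sup>2 < (- d * Re g)\<^sup>2"
    using assms(1,2) power_strict_mono[of R d 2] unfolding s2 by simp
  moreover have "0 \<le> - d * Re g"
    using assms(1,2) ray(1) by (simp add: mult_nonneg_nonpos)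
  ultimately have "s < - d * Re g"
    by (rule power_less_imp_less_base)
  then show "0 < t"
    by (simp add: t_def s_def)
  have "(cmod (- (of_real t * cnj g) - of_real d))\<^sup>2 - ((t + d * Re g)\<^sup>2 + (d * Im g)\<^sup>2)
          = (t\<^sup>2 - d\<^sup>2) * ((Re g)\<^sup>2 + (Im g)\<^sup>2 - 1)"
    unfolding cmod_power2 by (simp add: power2_eq_square algebra_simps)
  then have "(cmod (- (of_real t * cnj g) - of_real d))\<^sup>2 = (t + d * Re g)\<^sup>2 + (d * Im g)\<^sup>2"
    using g2 by simp
  also have "\<dots> = R\<^sup>2"
    by (simp add: t_def s2 flip: s_def)
  finally show "cmod (- (of_real t * cnj g) - of_real d) = R"
    using assms(1) by (simp add: power2_eq_iff_nonneg)
qed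

lemma Re_mult_sgn_min_at_ray_point:
  fixes d R :: real and g :: complex
  assumes "0 \<le> R" "R < d" and g: "cmod g = 1" and ray: "Re g < 0" "(d * Im g)\<^sup>2 \<le> R\<^sup>2"
    and "d \<in> sqrt_closure S" "R \<in> sqrt_closure S" "constructible S g"
  shows "\<exists>v. cmod (v - of_real d) = R \<and> constructible S v \<and>
           (\<forall>y. cmod (y - of_real d) = R \<longrightarrow> Re (g * sgn v) \<le> Re (g * sgn y))"
proof -
  define t where "t = - d * Re g - sqrt (R\<^sup>2 - (d * Im g)\<^sup>2)"
  define v where "v = - (of_real t * cnj g)"
  have "0 < t" "cmod (v - of_real d) = R"
    using ray_point_on_circle[OF assms(1-5)] by (simp_all add: t_def v_def)
  moreover have "Re (g * sgn v) = -1"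
  proof -
    have "cmod v = t"
      using \<open>0 < t\<close> g by (simp add: v_def norm_mult)
    then have "sgn v = - cnj g"
      using \<open>0 < t\<close> by (simp add: sgn_eq v_def)
    then show ?thesis
      using complex_norm_square[of g] g by simp
  qed
  moreover have "-1 \<le> Re (g * sgn y)" for y
  proof -
    have "cmod (g * sgn y) \<le> 1"
      using g by (simp add: norm_mult norm_sgn)
    then show ?thesis
      using abs_Re_le_cmod[of "g * sgn y"] by linarith
  qed
  moreover have "constructible S v"
    using assms(6-8) ray(2) unfolding v_def t_def
    by (intro constructible_mult constructible_of_real constructible_cnj constructible_minus
        sqrt_closure_diff sqrt_closure.mult sqrt_closure.sqrt sqrt_closure.neg sqrt_closure_power)
      (auto simp: constructible_def)
  ultimately show ?thesis
    by auto
qed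

text \<open>L is the length of the tangents from the origin to the circle, and L * u is a point
  of tangency.\<close>

lemma tangent_point_on_circle:
  fixes d R \<sigma> :: real
  assumes "0 \<le> R" "R < d" "\<sigma>\<^sup>2 = 1"
  defines "L \<equiv> sqrt (d\<^sup>2 - R\<^sup>2)"
  defines "u \<equiv> Complex (L / d) (\<sigma> * (R / d))"
  shows "cmod u = 1" and "sgn (of_real L * u) = u" and "cmod (of_real L * u - of_real d) = R"
proof -
  have "0 < d" "R\<^sup>2 < d\<^sup>2"
    using assms(1,2) by (auto simp: power_strict_mono)
  then have L2: "L\<^sup>2 = d\<^sup>2 - R\<^sup>2" and "0 < L"
    by (simp_all add: L_def)
  have "(L / d)\<^sup>2 + (R / d)\<^sup>2 = 1"
    using \<open>0 < d\<close> by (simp add: L2 power_divide field_simps)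
  then show "cmod u = 1"
    using assms(3) by (simp add: u_def cmod_def power_mult_distrib power_divide)
  then show "sgn (of_real L * u) = u"
    using \<open>0 < L\<close> by (simp add: sgn_eq norm_mult)
  have "of_real L * u - of_real d = of_real (R / d) * Complex (- R) (\<sigma> * L)"
    using \<open>0 < d\<close> by (simp add: complex_eq_iff u_def field_simps power2_eq_square[symmetric] L2)
  moreover have "cmod (Complex (- R) (\<sigma> * L)) = d"
    using \<open>0 < d\<close> assms(3) by (simp add: cmod_def power_mult_distrib L2)
  ultimately show "cmod (of_real L * u - of_real d) = R"
    using assms(1) \<open>0 < d\<close> by (simp add: norm_mult norm_divide)
qed

lemma Re_mult_sgn_min_at_tangent_point:
  fixes d R :: real and g :: complex
  assumes "0 \<le> R" "R < d" and g: "cmod g = 1" and tangent: "0 \<le> Re g \<or> R\<^sup>2 < (d * Im g)\<^sup>2"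
    and "d \<in> sqrt_closure S" "R \<in> sqrt_closure S"
  shows "\<exists>v. cmod (v - of_real d) = R \<and> constructible S v \<and>
           (\<forall>y. cmod (y - of_real d) = R \<longrightarrow> Re (g * sgn v) \<le> Re (g * sgn y))"
proof -
  define L where "L = sqrt (d\<^sup>2 - R\<^sup>2)"
  define \<sigma> :: real where "\<sigma> = (if 0 \<le> Im g then 1 else -1)"
  define u where "u = Complex (L / d) (\<sigma> * (R / d))"
  have \<sigma>: "\<sigma> * Im g = \<bar>Im g\<bar>" "\<sigma>\<^sup>2 = 1"
    by (simp_all add: \<sigma>_def)
  note tangent_point = tangent_point_on_circle[OF assms(1,2) \<sigma>(2), folded L_def, folded u_def]
  have "0 < d" "R\<^sup>2 < d\<^sup>2"
    using assms(1,2) by (auto simp: power_strict_mono)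
  then have "0 < L"
    by (simp add: L_def)
  have "Re (g * u) \<le> Re (g * sgn y)" if y: "cmod (y - of_real d) = R" for y
  proof -
    have "y \<noteq> 0"
      using y \<open>R < d\<close> by auto
    then have "(Re (sgn y))\<^sup>2 + (Im (sgn y))\<^sup>2 = 1"
      by (intro Re_Im_sq_sum_eq_1) (simp add: norm_sgn)
    moreover have "(L / d)\<^sup>2 + (R / d)\<^sup>2 = 1"
      using tangent_point(1) \<sigma>(2) by (simp add: u_def cmod_def power_mult_distrib power_divide)
    moreover have "0 \<le> Re g \<or> R / d * \<bar>Re g\<bar> < L / d * \<bar>Im g\<bar>"
    proof (cases "0 \<le> Re g")
      case False
      then have "(R / d)\<^sup>2 < (Im g)\<^sup>2"
        using tangent \<open>0 < d\<close> by (simp add: power_divide power_mult_distrib divide_less_eq mult.commute)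
      then show ?thesis
        using unit_vector_slope_less[of "L / d" "R / d" "Re g" "Im g"] \<open>0 < d\<close> \<open>0 < L\<close>
          \<open>(L / d)\<^sup>2 + (R / d)\<^sup>2 = 1\<close> Re_Im_sq_sum_eq_1[OF g] by simp
    qed simp
    ultimately have "Re g * (L / d) - \<bar>Im g\<bar> * (R / d) \<le> Re g * Re (sgn y) - Im g * Im (sgn y)"
      using sgn_bounds_on_circle[OF y \<open>R < d\<close>, folded L_def] assms(1) \<open>0 < d\<close> \<open>0 < L\<close>
      by (intro linear_min_on_circular_cap) simp_all
    then show ?thesis
      using \<sigma>(1) by (simp add: u_def algebra_simps)
  qed
  moreover have "L \<in> sqrt_closure S" "\<sigma> \<in> sqrt_closure S"
    using assms(5,6) \<open>R\<^sup>2 < d\<^sup>2\<close> unfolding L_def \<sigma>_def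
    by (auto intro!: sqrt_closure.sqrt sqrt_closure_diff sqrt_closure_power sqrt_closure.one
        sqrt_closure.neg)
  then have "constructible S (of_real L * u)"
    using assms(5,6) unfolding u_def
    by (intro constructible_mult constructible_of_real constructible_Complex sqrt_closure_divide
        sqrt_closure.mult)
  ultimately show ?thesis
    using tangent_point(2,3) by (intro exI[of _ "of_real L * u"]) auto
qed

lemma Re_mult_sgn_min_on_circle:
  fixes d R :: real and g :: complex
  assumes "0 \<le> R" "R < d" "cmod g = 1"
    and "d \<in> sqrt_closure S" "R \<in> sqrt_closure S" "constructible S g"
  shows "\<exists>v. cmod (v - of_real d) = R \<and> constructible S v \<and>
           (\<forall>y. cmod (y - of_real d) = R \<longrightarrow> Re (g * sgn v) \<le> Re (g * sgn y))"
proof (cases "Re g < 0 \<and> (d * Im g)\<^sup>2 \<le> R\<^sup>2")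
  case True
  then show ?thesis
    using Re_mult_sgn_min_at_ray_point[OF assms(1-3) _ _ assms(4-6)] by blast
next
  case False
  then have "0 \<le> Re g \<or> R\<^sup>2 < (d * Im g)\<^sup>2"
    by auto
  then show ?thesis
    using Re_mult_sgn_min_at_tangent_point[OF assms(1-3) _ assms(4,5)] by blast
qed

lemma Re_sgn_min_on_circle:
  fixes c :: complex and R :: real
  assumes "0 \<le> R" "R < cmod c" "constructible S c" "R \<in> sqrt_closure S"
  shows "\<exists>w. cmod (w - c) = R \<and> constructible S w \<and>
           (\<forall>y. cmod (y - c) = R \<longrightarrow> Re (sgn w) \<le> Re (sgn y))"
proof -
  define g where "g = sgn c"
  define d where "d = cmod c"
  have "c \<noteq> 0"
    using assms(1,2) by auto
  then have g: "cmod g = 1" and c: "c = g * of_real d"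
    by (simp_all add: g_def d_def norm_sgn) (simp add: sgn_eq)
  have "R < d" "d \<in> sqrt_closure S" "constructible S g"
    using assms(2,3) by (simp_all add: d_def g_def sqrt_closure_norm constructible_sgn)
  then obtain v where v: "cmod (v - of_real d) = R" "constructible S v"
    and v_min: "\<forall>y. cmod (y - of_real d) = R \<longrightarrow> Re (g * sgn v) \<le> Re (g * sgn y)"
    using Re_mult_sgn_min_on_circle[OF assms(1) _ g _ assms(4)] by blast
  have rotate: "cmod (g * z - c) = cmod (z - of_real d)" for z
    using g by (simp add: c norm_mult flip: right_diff_distrib)
  have sgn_rotate: "sgn (g * z) = g * sgn z" for z
    using g by (simp add: sgn_mult sgn_eq norm_mult)
  show ?thesis
  proof (intro exI[of _ "g * v"] conjI allI impI)
    show "cmod (g * v - c) = R"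
      using v(1) by (simp add: rotate)
    show "constructible S (g * v)"
      using v(2) \<open>constructible S g\<close> by (rule constructible_mult[rotated])
    fix y
    assume "cmod (y - c) = R"
    moreover have y: "y = g * (cnj g * y)"
      using complex_norm_square[of g] g by (simp add: mult.assoc[symmetric])
    ultimately have "cmod (cnj g * y - of_real d) = R"
      by (metis rotate)
    then have "Re (g * sgn v) \<le> Re (g * sgn (cnj g * y))"
      using v_min by blast
    then show "Re (sgn (g * v)) \<le> Re (sgn y)"
      by (simp only: sgn_rotate[symmetric] flip: y)
  qed
qed

text \<open>Centre and radius of the circle |a - z b| = r |1 - z|, the image of the circle
  |x| = r under x \<mapsto> (a - x) / (b - x).\<close>

definition apollonius_center :: "complex \<Rightarrow> complex \<Rightarrow> real \<Rightarrow> complex" where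
  "apollonius_center a b r = (cnj b * a - of_real (r\<^sup>2)) / of_real ((cmod b)\<^sup>2 - r\<^sup>2)"

definition apollonius_radius :: "complex \<Rightarrow> complex \<Rightarrow> real \<Rightarrow> real" where
  "apollonius_radius a b r = r * cmod (a - b) / ((cmod b)\<^sup>2 - r\<^sup>2)"

lemma apollonius_identity:
  fixes a b z :: complex and r :: real
  assumes "(cmod b)\<^sup>2 \<noteq> r\<^sup>2"
  shows "(cmod (a - z * b))\<^sup>2 - r\<^sup>2 * (cmod (1 - z))\<^sup>2
           = ((cmod b)\<^sup>2 - r\<^sup>2) * ((cmod (z - apollonius_center a b r))\<^sup>2 - (apollonius_radius a b r)\<^sup>2)"
proof -
  define \<beta> where "\<beta> = (cmod b)\<^sup>2 - r\<^sup>2"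
  define w where "w = cnj b * a - of_real (r\<^sup>2)"
  have "\<beta> \<noteq> 0"
    using assms by (simp add: \<beta>_def)
  have "of_real \<beta> * apollonius_center a b r = w"
    using \<open>\<beta> \<noteq> 0\<close> unfolding apollonius_center_def \<beta>_def[symmetric] w_def[symmetric] by simp
  then have "of_real \<beta> * z - w = of_real \<beta> * (z - apollonius_center a b r)"
    by (simp add: right_diff_distrib)
  then have "(cmod (of_real \<beta> * z - w))\<^sup>2 = \<beta>\<^sup>2 * (cmod (z - apollonius_center a b r))\<^sup>2"
    by (simp add: norm_mult power_mult_distrib)
  moreover have "\<beta> * ((cmod (a - z * b))\<^sup>2 - r\<^sup>2 * (cmod (1 - z))\<^sup>2)
          = (cmod (of_real \<beta> * z - w))\<^sup>2 - (r * cmod (a - b))\<^sup>2"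
    unfolding cmod_power2 \<beta>_def w_def power_mult_distrib
    by (simp add: power2_eq_square algebra_simps)
  moreover have "\<beta> * (\<beta> * (X - (r * cmod (a - b) / \<beta>)\<^sup>2)) = \<beta>\<^sup>2 * X - (r * cmod (a - b))\<^sup>2" for X
    using \<open>\<beta> \<noteq> 0\<close> by (simp add: power_divide field_simps power2_eq_square)
  ultimately show ?thesis
    using \<open>\<beta> \<noteq> 0\<close> unfolding \<beta>_def[symmetric] apollonius_radius_def
    by (metis mult_left_cancel)
qed

lemma apollonius_radius_nonneg:
  assumes "0 \<le> r" "r < cmod b"
  shows "0 \<le> apollonius_radius a b r"
  using assms by (simp add: apollonius_radius_def power_strict_mono)

lemma apollonius_circle_iff:
  assumes "0 \<le> r" "r < cmod b"
  shows "cmod (a - z * b) = r * cmod (1 - z)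
           \<longleftrightarrow> cmod (z - apollonius_center a b r) = apollonius_radius a b r"
proof -
  have "r\<^sup>2 < (cmod b)\<^sup>2"
    using assms by (simp add: power_strict_mono)
  then have "cmod (a - z * b) = r * cmod (1 - z) \<longleftrightarrow> (cmod (a - z * b))\<^sup>2 - (r * cmod (1 - z))\<^sup>2 = 0"
    using assms(1) by (simp add: power2_eq_iff_nonneg)
  also have "\<dots> \<longleftrightarrow> (cmod (z - apollonius_center a b r))\<^sup>2 - (apollonius_radius a b r)\<^sup>2 = 0"
    using apollonius_identity[of b r a z] \<open>r\<^sup>2 < (cmod b)\<^sup>2\<close> by (simp add: power_mult_distrib)
  also have "\<dots> \<longleftrightarrow> cmod (z - apollonius_center a b r) = apollonius_radius a b r"
    using apollonius_radius_nonneg[OF assms] by (simp add: power2_eq_iff_nonneg)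
  finally show ?thesis .
qed

lemma apollonius_radius_less_norm_center:
  assumes "0 \<le> r" "r < cmod a" "r < cmod b"
  shows "apollonius_radius a b r < cmod (apollonius_center a b r)"
proof -
  have "r\<^sup>2 < (cmod a)\<^sup>2" "r\<^sup>2 < (cmod b)\<^sup>2"
    using assms by (simp_all add: power_strict_mono)
  then have "0 < ((cmod b)\<^sup>2 - r\<^sup>2) * ((cmod (apollonius_center a b r))\<^sup>2 - (apollonius_radius a b r)\<^sup>2)"
    using apollonius_identity[of b r a 0] by simp
  then have "(apollonius_radius a b r)\<^sup>2 < (cmod (apollonius_center a b r))\<^sup>2"
    using \<open>r\<^sup>2 < (cmod b)\<^sup>2\<close> by (simp add: zero_less_mult_iff)
  then show ?thesis
    by (rule power_less_imp_less_base) simp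
qed

lemma ratio_on_apollonius_circle:
  assumes "0 \<le> r" "r < cmod b" "cmod x = r"
  shows "cmod ((a - x) / (b - x) - apollonius_center a b r) = apollonius_radius a b r"
proof -
  have "b \<noteq> x"
    using assms by auto
  then have "a - (a - x) / (b - x) * b = x * (1 - (a - x) / (b - x))"
    by (simp add: field_simps)
  then show ?thesis
    using assms by (simp add: norm_mult flip: apollonius_circle_iff)
qed

lemma apollonius_circle_preimage:
  assumes "0 \<le> r" "r < cmod b" "a \<noteq> b"
    and w: "cmod (w - apollonius_center a b r) = apollonius_radius a b r"
  defines "x \<equiv> (a - w * b) / (1 - w)"
  shows "cmod x = r" and "(a - x) / (b - x) = w"
proof -
  have on_circle: "cmod (a - w * b) = r * cmod (1 - w)"
    using w assms(1,2) by (simp add: apollonius_circle_iff)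
  moreover have "w \<noteq> 1"
    using on_circle \<open>a \<noteq> b\<close> by auto
  ultimately show "cmod x = r"
    by (simp add: x_def norm_divide)
  have "a - x = w * (b - a) / (1 - w)" "b - x = (b - a) / (1 - w)"
    using \<open>w \<noteq> 1\<close> by (simp_all add: x_def field_simps)
  then show "(a - x) / (b - x) = w"
    using \<open>w \<noteq> 1\<close> \<open>a \<noteq> b\<close> by simp
qed

lemma constructible_apollonius_center:
  assumes "constructible S a" "constructible S b" "r \<in> sqrt_closure S"
  shows "constructible S (apollonius_center a b r)"
  unfolding apollonius_center_def using assms
  by (intro constructible_divide constructible_diff constructible_mult constructible_cnj
      constructible_of_real sqrt_closure_diff sqrt_closure_power sqrt_closure_norm)

lemma sqrt_closure_apollonius_radius:
  assumes "constructible S a" "constructible S b" "r \<in> sqrt_closure S"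
  shows "apollonius_radius a b r \<in> sqrt_closure S"
  unfolding apollonius_radius_def using assms
  by (intro sqrt_closure_divide sqrt_closure.mult sqrt_closure_diff sqrt_closure_power
      sqrt_closure_norm constructible_diff)

lemma abs_Re_sgn_le_1: "\<bar>Re (sgn z)\<bar> \<le> 1"
  using abs_Re_le_cmod[of "sgn z"] norm_sgn[of z] by (simp only: split: if_splits; linarith)

lemma pangle_eq_arccos_Re_sgn: "pangle A X B = arccos (Re (sgn ((A - X) / (B - X))))"
proof -
  have "inner u v / (cmod u * cmod v) = Re (sgn (u / v))" for u v :: complex
  proof (cases "u = 0 \<or> v = 0")
    case False
    have "Re (u / v) = inner u v / (cmod v)\<^sup>2"
      by (simp add: Re_divide inner_complex_def cmod_power2)
    moreover have "Re (sgn (u / v)) = Re (u / v) / (cmod u / cmod v)"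
      by (simp only: Re_sgn norm_divide)
    ultimately show ?thesis
      using False by (simp add: power2_eq_square)
  qed auto
  then show ?thesis
    by (simp only: pangle_def)
qed

lemma max_angle_point_on_circle_at_origin:
  fixes a b :: complex and r :: real
  assumes "0 < r" "r < cmod a" "r < cmod b"
    and "constructible S a" "constructible S b" "r \<in> sqrt_closure S"
  shows "\<exists>x0. cmod x0 = r \<and> constructible S x0 \<and> (\<forall>x. cmod x = r \<longrightarrow> pangle a x b \<le> pangle a x0 b)"
proof (cases "a = b")
  case True
  have "pangle a x a = 0" if "cmod x = r" for x
    using that assms(2) by (auto simp: pangle_eq_arccos_Re_sgn)
  then show ?thesis
    using \<open>0 < r\<close> assms(6) True by (intro exI[of _ "of_real r"]) (simp add: constructible_of_real)
next
  case False
  define c where "c = apollonius_center a b r"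
  define R where "R = apollonius_radius a b r"
  have "0 \<le> R" "R < cmod c" "constructible S c" "R \<in> sqrt_closure S"
    using assms apollonius_radius_nonneg[of r b a] apollonius_radius_less_norm_center[of r a b]
      constructible_apollonius_center sqrt_closure_apollonius_radius
    by (simp_all add: c_def R_def)
  then obtain w0 where w0: "cmod (w0 - c) = R" "constructible S w0"
    and w0_min: "\<forall>y. cmod (y - c) = R \<longrightarrow> Re (sgn w0) \<le> Re (sgn y)"
    using Re_sgn_min_on_circle by blast
  define x0 where "x0 = (a - w0 * b) / (1 - w0)"
  have "cmod x0 = r" "(a - x0) / (b - x0) = w0"
    using apollonius_circle_preimage[OF less_imp_le[OF \<open>0 < r\<close>] \<open>r < cmod b\<close> False] w0(1)
    by (simp_all add: c_def R_def x0_def)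
  moreover have "constructible S x0"
    unfolding x0_def using assms(4,5) w0(2) constructible_of_real[OF sqrt_closure.one]
    by (intro constructible_divide constructible_diff constructible_mult) simp_all
  moreover have "pangle a x b \<le> pangle a x0 b" if "cmod x = r" for x
  proof -
    have "Re (sgn w0) \<le> Re (sgn ((a - x) / (b - x)))"
      using w0_min ratio_on_apollonius_circle[OF less_imp_le[OF \<open>0 < r\<close>] \<open>r < cmod b\<close> that]
      unfolding c_def R_def by blast
    then show ?thesis
      unfolding pangle_eq_arccos_Re_sgn \<open>(a - x0) / (b - x0) = w0\<close>
      using abs_Re_sgn_le_1 by (metis abs_le_iff arccos_le_arccos minus_le_iff)
  qed
  ultimately show ?thesis
    by blast
qed

lemma max_angle_point_on_circle:
  fixes A B P :: complex and r :: real
  assumes "0 < r" "r < dist A P" "r < dist B P"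
    and "constructible S A" "constructible S B" "constructible S P" "r \<in> sqrt_closure S"
  shows "\<exists>Q. dist P Q = r \<and> constructible S Q \<and> (\<forall>X. dist P X = r \<longrightarrow> pangle A X B \<le> pangle A Q B)"
proof -
  obtain x0 where x0: "cmod x0 = r" "constructible S x0"
    and x0_max: "\<forall>x. cmod x = r \<longrightarrow> pangle (A - P) x (B - P) \<le> pangle (A - P) x0 (B - P)"
    using max_angle_point_on_circle_at_origin[of r "A - P" "B - P" S] assms
    by (auto simp: dist_norm intro: constructible_diff)
  have translate: "pangle (A - P) (X - P) (B - P) = pangle A X B" for X
    by (simp add: pangle_def)
  have "pangle A X B \<le> pangle A (P + x0) B" if "dist P X = r" for X
  proof -
    have "cmod (X - P) = r"
      using that by (simp add: dist_norm norm_minus_commute)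
    then show ?thesis
      using x0_max translate[of X] translate[of "P + x0"] by auto
  qed
  moreover have "dist P (P + x0) = r" "constructible S (P + x0)"
    using x0 assms(6) by (simp_all add: dist_norm constructible_add)
  ultimately show ?thesis
    by blast
qed

theorem proposition2:
  fixes A B P :: complex and r :: real
  assumes "r > 0" and "dist A P > r" and "dist B P > r"
  shows "\<exists>Q. dist P Q = r
           \<and> (\<forall>X. dist P X = r \<longrightarrow> pangle A X B \<le> pangle A Q B)
           \<and> Re Q \<in> sqrt_closure {Re A, Im A, Re B, Im B, Re P, Im P, r}
           \<and> Im Q \<in> sqrt_closure {Re A, Im A, Re B, Im B, Re P, Im P, r}"
proof -
  let ?S = "{Re A, Im A, Re B, Im B, Re P, Im P, r}"
  have "constructible ?S A" "constructible ?S B" "constructible ?S P" "r \<in> sqrt_closure ?S"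
    by (simp_all add: constructible_def sqrt_closure.base)
  then show ?thesis
    using max_angle_point_on_circle[OF assms] unfolding constructible_def by blast
qed

end
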